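(* Let $(X,d_X)$, $(Y,d_Y)$ be metric spaces and $f:X\to X$, $g:Y\to Y$ maps. Suppose $h:X\to Y$ is a homeomorphism with $h\circ f=g\circ h$. Then for all $x,y\in X$, $x\,\mathcal{C}^+\,y$ (with respect to $f$) if and only if $h(x)\,\mathcal{C}^+\,h(y)$ (with respect to $g$).
   Context: For a metric space $(X,d)$ and a map $f:X\to X$, let $C(X,\mathbb{R}^+)$ be the set of continuous functions $\varepsilon:X\to(0,\infty)$. Write $x\,\mathcal{C}^+\,y$ if for every $\varepsilon\in C(X,\mathbb{R}^+)$ there are finitely many points $x_0=x,x_1,\dots,x_n=y$ in $X$, $n\in\mathbb{N}$, with $d(f(x_i),x_{i+1})<\varepsilon(f(x_i))$ for all $i=0,\dots,n-1$. *)

theory Defs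
  imports "HOL-Analysis.Analysis"
begin

definition chain_plus :: "('a::metric_space \<Rightarrow> 'a) \<Rightarrow> 'a \<Rightarrow> 'a \<Rightarrow> bool" where
  "chain_plus f x y \<longleftrightarrow>
     (\<forall>eps :: 'a \<Rightarrow> real. continuous_on UNIV eps \<and> (\<forall>z. 0 < eps z) \<longrightarrow>
        (\<exists>n::nat. \<exists>xs :: nat \<Rightarrow> 'a. n \<ge> 1 \<and> xs 0 = x \<and> xs n = y \<and>
           (\<forall>i<n. dist (f (xs i)) (xs (Suc i)) < eps (f (xs i)))))"

end

theory Submission
  imports Defs
begin

text \<open>A conjugacy \<open>h\<close> maps chains of \<open>f\<close> to chains of \<open>g\<close>, and its inverse maps them back,
  so it suffices to transport chains along a continuous semiconjugacy. Given a continuous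
  positive \<open>\<epsilon>\<close> on \<open>Y\<close>, one needs a continuous positive \<open>\<delta>\<close> on \<open>X\<close> such that
  \<open>d(p, q) < \<delta>(p)\<close> implies \<open>d(h p, h q) < \<epsilon>(h p)\<close>. The largest such radius \<open>\<rho>(p) \<le> 1\<close> need
  not be continuous, but it is locally bounded away from \<open>0\<close>; its lower envelope
  \<open>\<delta>(p) = inf\<^sub>z (d(p, z) + \<rho>(z))\<close> is then a positive 1-Lipschitz function below \<open>\<rho>\<close>.\<close>

lemma positive_lipschitz_minorant:
  fixes \<rho> :: "'a::metric_space \<Rightarrow> real"
  assumes nonneg: "\<And>z. 0 \<le> \<rho> z"
    and locally_pos: "\<And>p. \<exists>c>0. \<forall>\<^sub>F z in nhds p. c \<le> \<rho> z"
  shows "\<exists>\<delta>. 1-lipschitz_on UNIV \<delta> \<and> (\<forall>p. 0 < \<delta> p \<and> \<delta> p \<le> \<rho> p)"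
proof -
  define \<delta> where "\<delta> p = Inf (range (\<lambda>z. dist p z + \<rho> z))" for p
  have bdd: "bdd_below (range (\<lambda>z. dist p z + \<rho> z))" for p
    by (rule bdd_belowI2[where m = 0]) (simp add: nonneg add_nonneg_nonneg)
  have lower: "\<delta> p \<le> dist p z + \<rho> z" for p z
    unfolding \<delta>_def by (rule cInf_lower) (auto intro: bdd)
  have pos: "0 < \<delta> p" for p
  proof -
    obtain c where "c > 0" and "\<forall>\<^sub>F z in nhds p. c \<le> \<rho> z"
      using locally_pos by blast
    then obtain s where "s > 0" and s: "\<And>z. dist z p < s \<Longrightarrow> c \<le> \<rho> z"
      unfolding eventually_nhds_metric by blast
    have "min c s \<le> dist p z + \<rho> z" for z
    proof (cases "dist z p < s")
      case True
      then show ?thesis using s[of z] by (simp add: min.coboundedI1 add_increasing)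
    next
      case False
      then show ?thesis using nonneg[of z] by (simp add: dist_commute min.coboundedI2 add_increasing2)
    qed
    then have "min c s \<le> \<delta> p"
      unfolding \<delta>_def by (intro cInf_greatest) auto
    then show ?thesis using \<open>c > 0\<close> \<open>s > 0\<close> by simp
  qed
  have shift: "\<delta> p \<le> \<delta> p' + dist p p'" for p p'
  proof -
    have "\<delta> p - dist p p' \<le> dist p' z + \<rho> z" for z
      using lower[of p z] dist_triangle[of p z p'] by simp
    then have "\<delta> p - dist p p' \<le> \<delta> p'"
      unfolding \<delta>_def by (intro cInf_greatest) auto
    then show ?thesis by simp
  qed
  have "1-lipschitz_on UNIV \<delta>"
  proof (rule lipschitz_onI)
    show "dist (\<delta> p) (\<delta> p') \<le> 1 * dist p p'" for p p'
      using shift[of p p'] shift[of p' p] by (auto simp: dist_real_def dist_commute abs_le_iff)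
  qed simp
  moreover have "\<delta> p \<le> \<rho> p" for p
    using lower[of p p] by simp
  ultimately show ?thesis using pos by blast
qed

lemma locally_uniform_radius_of_continuity:
  fixes h :: "'a::metric_space \<Rightarrow> 'b::metric_space" and E :: "'a \<Rightarrow> real"
  assumes "continuous_on UNIV h" "continuous_on UNIV E" "\<And>p. 0 < E p"
  shows "\<exists>c>0. \<forall>\<^sub>F z in nhds p. \<forall>q. dist z q < c \<longrightarrow> dist (h z) (h q) < E z"
proof -
  define e where "e = E p"
  have "e > 0" using assms(3) by (simp add: e_def)
  obtain s where "s > 0" and s: "\<And>w. dist w p < s \<Longrightarrow> dist (h w) (h p) < e / 4"
    using assms(1) \<open>e > 0\<close> unfolding continuous_on_iff
    by (metis UNIV_I divide_pos_pos zero_less_numeral)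
  obtain t where "t > 0" and t: "\<And>z. dist z p < t \<Longrightarrow> dist (E z) e < e / 2"
    using assms(2) \<open>e > 0\<close> unfolding continuous_on_iff e_def
    by (metis UNIV_I half_gt_zero)
  have "dist (h z) (h q) < E z" if z: "dist z p < min t (s / 2)" and q: "dist z q < s / 2" for z q
  proof -
    have "dist z p < s / 2" using z by simp
    then have "dist z p < s" "dist q p < s"
      using q dist_triangle[of q p z] dist_commute[of q z] zero_le_dist[of z p] by linarith+
    then have "dist (h z) (h q) < e / 2"
      using s[of z] s[of q] dist_triangle2[of "h z" "h q" "h p"] by linarith
    also have "e / 2 < E z" using t[of z] z unfolding dist_real_def by linarith
    finally show ?thesis .
  qed
  then have "\<forall>\<^sub>F z in nhds p. \<forall>q. dist z q < s / 2 \<longrightarrow> dist (h z) (h q) < E z"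
    unfolding eventually_nhds_metric using \<open>s > 0\<close> \<open>t > 0\<close>
    by (intro exI[of _ "min t (s / 2)"]) auto
  then show ?thesis using \<open>s > 0\<close> by (intro exI[of _ "s / 2"]) auto
qed

lemma continuous_radius_of_continuity:
  fixes h :: "'a::metric_space \<Rightarrow> 'b::metric_space" and E :: "'a \<Rightarrow> real"
  assumes "continuous_on UNIV h" "continuous_on UNIV E" "\<And>p. 0 < E p"
  shows "\<exists>\<delta>. continuous_on UNIV \<delta> \<and> (\<forall>p. 0 < \<delta> p) \<and>
    (\<forall>p q. dist p q < \<delta> p \<longrightarrow> dist (h p) (h q) < E p)"
proof -
  define admissible where
    "admissible p = {r. 0 \<le> r \<and> r \<le> 1 \<and> (\<forall>q. dist p q < r \<longrightarrow> dist (h p) (h q) < E p)}" for p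
  define \<rho> where "\<rho> p = Sup (admissible p)" for p
  have nonempty: "0 \<in> admissible p" and bdd: "bdd_above (admissible p)" for p
    by (auto simp: admissible_def intro: bdd_aboveI[where M = 1])
  have below_admissible: "r \<le> \<rho> p" if "r \<in> admissible p" for r p
    unfolding \<rho>_def using that bdd by (rule cSup_upper)
  have "\<exists>c>0. \<forall>\<^sub>F z in nhds p. c \<le> \<rho> z" for p
  proof -
    obtain c where "c > 0" and "\<forall>\<^sub>F z in nhds p. \<forall>q. dist z q < c \<longrightarrow> dist (h z) (h q) < E z"
      using locally_uniform_radius_of_continuity[OF assms] by blast
    then have "\<forall>\<^sub>F z in nhds p. min c 1 \<le> \<rho> z"
      by (elim eventually_mono) (auto simp: admissible_def intro!: below_admissible)
    then show ?thesis using \<open>c > 0\<close> by (intro exI[of _ "min c 1"]) auto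
  qed
  then obtain \<delta> where \<delta>: "1-lipschitz_on UNIV \<delta>" "\<And>p. 0 < \<delta> p" "\<And>p. \<delta> p \<le> \<rho> p"
    using positive_lipschitz_minorant[of \<rho>] below_admissible nonempty by (metis order_trans)
  have "dist (h p) (h q) < E p" if "dist p q < \<delta> p" for p q
  proof -
    have "dist p q < Sup (admissible p)" using that \<delta>(3)[of p] by (simp add: \<rho>_def)
    then obtain r where "r \<in> admissible p" "dist p q < r"
      using less_cSup_iff[OF _ bdd] nonempty by blast
    then show ?thesis by (simp add: admissible_def)
  qed
  then show ?thesis using \<delta> lipschitz_on_continuous_on by blast
qed

lemma chain_plus_semiconjugate:
  fixes f :: "'a::metric_space \<Rightarrow> 'a" and g :: "'b::metric_space \<Rightarrow> 'b" and h :: "'a \<Rightarrow> 'b"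
  assumes "continuous_on UNIV h" and semiconj: "\<And>x. h (f x) = g (h x)"
    and "chain_plus f x y"
  shows "chain_plus g (h x) (h y)"
  unfolding chain_plus_def
proof (intro allI impI)
  fix \<epsilon> :: "'b \<Rightarrow> real"
  assume \<epsilon>: "continuous_on UNIV \<epsilon> \<and> (\<forall>z. 0 < \<epsilon> z)"
  then have "continuous_on UNIV (\<epsilon> \<circ> h)"
    using assms(1) continuous_on_compose continuous_on_subset by blast
  then obtain \<delta> :: "'a \<Rightarrow> real" where "continuous_on UNIV \<delta>" "\<forall>p. 0 < \<delta> p"
    and \<delta>: "\<And>p q. dist p q < \<delta> p \<Longrightarrow> dist (h p) (h q) < \<epsilon> (h p)"
    using continuous_radius_of_continuity[OF assms(1)] \<epsilon> by (metis comp_apply)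
  then obtain n xs where "n \<ge> 1" "xs 0 = x" "xs n = y"
    and steps: "\<forall>i<n. dist (f (xs i)) (xs (Suc i)) < \<delta> (f (xs i))"
    using \<open>chain_plus f x y\<close> unfolding chain_plus_def by blast
  moreover have "\<forall>i<n. dist (g (h (xs i))) (h (xs (Suc i))) < \<epsilon> (g (h (xs i)))"
    using steps \<delta> by (simp flip: semiconj)
  ultimately show "\<exists>n ys. n \<ge> 1 \<and> ys 0 = h x \<and> ys n = h y \<and>
      (\<forall>i<n. dist (g (ys i)) (ys (Suc i)) < \<epsilon> (g (ys i)))"
    by (intro exI[of _ n] exI[of _ "h \<circ> xs"]) auto
qed

theorem lemma4p1:
  fixes f :: "'a::metric_space \<Rightarrow> 'a" and g :: "'b::metric_space \<Rightarrow> 'b"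
    and h :: "'a \<Rightarrow> 'b"
  assumes "\<exists>k. homeomorphism UNIV UNIV h k"
    and "h \<circ> f = g \<circ> h"
  shows "\<forall>x y. chain_plus f x y \<longleftrightarrow> chain_plus g (h x) (h y)"
proof -
  obtain k where "continuous_on UNIV h" "continuous_on UNIV k"
    and kh: "\<And>x. k (h x) = x" and hk: "\<And>y. h (k y) = y"
    using assms(1) unfolding homeomorphism_def by auto
  have hf: "h (f x) = g (h x)" for x
    using assms(2) by (metis comp_apply)
  then have kg: "k (g y) = f (k y)" for y
    by (metis hk kh)
  show ?thesis
  proof (intro allI iffI)
    show "chain_plus g (h x) (h y)" if "chain_plus f x y" for x y
      using chain_plus_semiconjugate[OF \<open>continuous_on UNIV h\<close> hf that] .
    show "chain_plus f x y" if "chain_plus g (h x) (h y)" for x y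
      using chain_plus_semiconjugate[OF \<open>continuous_on UNIV k\<close> kg that] by (simp add: kh)
  qed
qed

end
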